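(* Let $\bm A=(A_1,\dots,A_d)$ be Hermitian matrices in $M_n(\mathbb{C})$, $B\in M_n(\mathbb{C})$, and $(\bm\lambda,\nu)\in\mathbb{R}^d\times\mathbb{C}$. Suppose there is a unit vector $\bm\psi\in\mathbb{C}^n$ with $$\sum_{i=1}^d\|A_i\bm\psi-\lambda_i\bm\psi\|^2+\|B\bm\psi-\nu\bm\psi\|^2\le\epsilon_1$$ and that $\sum_{i\neq k}\|[A_i,A_k]\|+\|F_{(\bm\lambda,\nu)}(\bm A,B)\|\le\epsilon_2$, for some $\epsilon_1,\epsilon_2\ge0$. Then $(\bm\lambda,\nu)\in\dot\Lambda^{C}_{\epsilon}(\bm A,B)$ with $\epsilon=\sqrt{\epsilon_1+\epsilon_2}$.
   Context: Let $n,d,m$ be positive integers. Fix Hermitian matrices $\Gamma_1,\dots,\Gamma_d\in M_{2m}(\mathbb{C})$ with $\Gamma_i^2=I_{2m}$ and $\Gamma_i\Gamma_j=-\Gamma_j\Gamma_i$ for $i\neq j$ (a Clifford representation; the paper uses a specific one built from Pauli matrices). Write $P=\begin{bmatrix} I_m&0\\0&0_m\end{bmatrix}$ and $Q=\begin{bmatrix}0_m&0\\0&I_m\end{bmatrix}$ in $M_{2m}(\mathbb{C})$. For a $d$-tuple $\bm A=(A_1,\dots,A_d)$ of Hermitian matrices in $M_n(\mathbb{C})$, a matrix $B\in M_n(\mathbb{C})$ (not necessarily Hermitian or normal), and a probe site $(\bm\lambda,\nu)\in\mathbb{R}^d\times\mathbb{C}$, the non-Hermitian spectral localizer is $$L_{(\bm\lambda,\nu)}(\bm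 A,B)=\sum_{i=1}^d (A_i-\lambda_i I)\otimes\Gamma_i+(B-\nu I)\otimes P-(B-\nu I)^\dagger\otimes Q\in M_{2mn}(\mathbb{C}).$$ The Clifford radial gap is $\dot\mu^{C}_{(\bm\lambda,\nu)}(\bm A,B)=\sigma_{\min}\big(L_{(\bm\lambda,\nu)}(\bm A,B)\big)$, and the Clifford radial $\epsilon$-pseudospectrum is $\dot\Lambda^{C}_\epsilon(\bm A,B)=\{(\bm\lambda,\nu)\in\mathbb{R}^d\times\mathbb{C}:\dot\mu^{C}_{(\bm\lambda,\nu)}(\bm A,B)\le\epsilon\}$. Define $$F_{(\bm\lambda,\nu)}(\bm A,B)=\sum_{i=1}^d\big(G_i+G_i^\dagger\big)-\sum_{i=1}^d\big(H_i+H_i^\dagger\big),\quad G_i=(A_i-\lambda_i I)(B-\nu I)\otimes\Gamma_iP,\quad H_i=(A_i-\lambda_i I)(B-\nu I)^\dagger\otimes\Gamma_iQ.$$ All matrix norms are operator norms; vector norms are Euclidean. *)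

theory Defs
  imports "Jordan_Normal_Form.Matrix"
begin

definition ctrans :: "complex mat \<Rightarrow> complex mat" where
  "ctrans M = mat (dim_col M) (dim_row M) (\<lambda>(i,j). cnj (M $$ (j,i)))"

definition hermitian_mat :: "complex mat \<Rightarrow> bool" where
  "hermitian_mat M \<longleftrightarrow> M \<in> carrier_mat (dim_row M) (dim_row M) \<and> ctrans M = M"

definition kron :: "complex mat \<Rightarrow> complex mat \<Rightarrow> complex mat" where
  "kron A B = mat (dim_row A * dim_row B) (dim_col A * dim_col B)
     (\<lambda>(i,j). A $$ (i div dim_row B, j div dim_col B) * B $$ (i mod dim_row B, j mod dim_col B))"

text \<open>Finite sum of N x N matrices (the library's sum does not track dimensions).\<close>
definition msum :: "nat \<Rightarrow> ('i \<Rightarrow> complex mat) \<Rightarrow> 'i set \<Rightarrow> complex mat" where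
  "msum N f I = mat N N (\<lambda>ij. \<Sum>k\<in>I. f k $$ ij)"

definition vnorm :: "complex vec \<Rightarrow> real" where
  "vnorm v = sqrt (\<Sum>i<dim_vec v. (cmod (v $ i))\<^sup>2)"

definition opnorm :: "complex mat \<Rightarrow> real" where
  "opnorm M = Sup {vnorm (M *\<^sub>v x) | x. x \<in> carrier_vec (dim_col M) \<and> vnorm x = 1}"

definition sigma_min :: "complex mat \<Rightarrow> real" where
  "sigma_min M = Inf {vnorm (M *\<^sub>v x) | x. x \<in> carrier_vec (dim_col M) \<and> vnorm x = 1}"

definition clifford_rep :: "nat \<Rightarrow> complex mat list \<Rightarrow> bool" where
  "clifford_rep m Gs \<longleftrightarrow>
     (\<forall>i<length Gs. Gs!i \<in> carrier_mat (2*m) (2*m) \<and> hermitian_mat (Gs!i)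
        \<and> Gs!i * Gs!i = 1\<^sub>m (2*m)
        \<and> (\<forall>j<length Gs. i \<noteq> j \<longrightarrow> Gs!i * Gs!j = - (Gs!j * Gs!i)))"

definition Pmat :: "nat \<Rightarrow> complex mat" where
  "Pmat m = mat (2*m) (2*m) (\<lambda>(i,j). if i = j \<and> i < m then 1 else 0)"

definition Qmat :: "nat \<Rightarrow> complex mat" where
  "Qmat m = mat (2*m) (2*m) (\<lambda>(i,j). if i = j \<and> m \<le> i then 1 else 0)"

definition localizer ::
  "nat \<Rightarrow> complex mat list \<Rightarrow> complex mat list \<Rightarrow> complex mat \<Rightarrow> real list \<Rightarrow> complex \<Rightarrow> complex mat" where
  "localizer m Gs As B lam nu =
     (let n = dim_row B; N = n * (2*m); Y = B - nu \<cdot>\<^sub>m 1\<^sub>m n in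
      msum N (\<lambda>i. kron (As!i - complex_of_real (lam!i) \<cdot>\<^sub>m 1\<^sub>m n) (Gs!i)) {..<length As}
      + kron Y (Pmat m) - kron (ctrans Y) (Qmat m))"

definition clifford_radial_gap ::
  "nat \<Rightarrow> complex mat list \<Rightarrow> complex mat list \<Rightarrow> complex mat \<Rightarrow> real list \<Rightarrow> complex \<Rightarrow> real" where
  "clifford_radial_gap m Gs As B lam nu = sigma_min (localizer m Gs As B lam nu)"

definition clifford_radial_pseudospectrum ::
  "nat \<Rightarrow> complex mat list \<Rightarrow> real \<Rightarrow> complex mat list \<Rightarrow> complex mat \<Rightarrow> (real list \<times> complex) set" where
  "clifford_radial_pseudospectrum m Gs eps As B =
     {(lam, nu). length lam = length As \<and> clifford_radial_gap m Gs As B lam nu \<le> eps}"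

definition Fmat ::
  "nat \<Rightarrow> complex mat list \<Rightarrow> complex mat list \<Rightarrow> complex mat \<Rightarrow> real list \<Rightarrow> complex \<Rightarrow> complex mat" where
  "Fmat m Gs As B lam nu =
     (let n = dim_row B; N = n * (2*m); Y = B - nu \<cdot>\<^sub>m 1\<^sub>m n;
          X = (\<lambda>i. As!i - complex_of_real (lam!i) \<cdot>\<^sub>m 1\<^sub>m n);
          G = (\<lambda>i. kron (X i * Y) (Gs!i * Pmat m));
          H = (\<lambda>i. kron (X i * ctrans Y) (Gs!i * Qmat m)) in
      msum N (\<lambda>i. G i + ctrans (G i)) {..<length As}
      - msum N (\<lambda>i. H i + ctrans (H i)) {..<length As})"

end

theory Submission
  imports Defs "HOL-Analysis.L2_Norm"
begin

(* Test the localizer on psi (x) e0, where e0 is the first standard basis vector of C^(2m).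
   Since P e0 = e0 and Q e0 = 0, L (psi (x) e0) is the sum of the vectors (A_i - lam_i) psi (x) Gamma_i e0
   and (B - nu) psi (x) e0.  In its squared norm the Gram matrix <Gamma_i e0, Gamma_k e0> = (Gamma_i Gamma_k)_00
   is the identity on the diagonal and antisymmetric off it: the diagonal gives sum_i |(A_i - lam_i) psi|^2,
   the off-diagonal terms only see the commutators [A_i, A_k], and the cross terms with (B - nu) psi (x) e0
   add up to <psi (x) e0, F (psi (x) e0)>.  Hence |L (psi (x) e0)|^2 <= eps1 + eps2, which bounds the
   smallest singular value of L. *)

section \<open>Inner products of complex vectors\<close>

(* Antilinear in the first argument, as in the paper; the library's cscalar_prod conjugates the second. *)
definition cinner :: "complex vec \<Rightarrow> complex vec \<Rightarrow> complex" where
  "cinner x y = (\<Sum>j<dim_vec x. cnj (x $ j) * y $ j)"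

lemma cinner_commute: "dim_vec y = dim_vec x \<Longrightarrow> cinner y x = cnj (cinner x y)"
  unfolding cinner_def by (simp add: mult.commute)

lemma cinner_self: "cinner x x = complex_of_real ((vnorm x)\<^sup>2)"
proof -
  have "cnj z * z = complex_of_real ((cmod z)\<^sup>2)" for z
    by (simp only: complex_norm_square mult.commute)
  then show ?thesis
    unfolding cinner_def vnorm_def by (simp add: sum_nonneg of_real_sum)
qed

lemma vnorm_nonneg: "0 \<le> vnorm x"
  unfolding vnorm_def by (simp add: sum_nonneg)

lemma vnorm_sq_eq_Re_cinner: "(vnorm x)\<^sup>2 = Re (cinner x x)"
  by (simp add: cinner_self)

lemma cinner_Cauchy_Schwarz:
  assumes "dim_vec y = dim_vec x"
  shows "cmod (cinner x y) \<le> vnorm x * vnorm y"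
proof -
  have "cmod (cinner x y) \<le> (\<Sum>j<dim_vec x. cmod (x $ j) * cmod (y $ j))"
    unfolding cinner_def by (rule order.trans[OF norm_sum]) (simp add: norm_mult)
  also have "\<dots> \<le> L2_set (\<lambda>j. cmod (x $ j)) {..<dim_vec x}
      * L2_set (\<lambda>j. cmod (y $ j)) {..<dim_vec x}"
    using L2_set_mult_ineq[of "\<lambda>j. cmod (x $ j)" "\<lambda>j. cmod (y $ j)" "{..<dim_vec x}"] by simp
  finally show ?thesis using assms by (simp add: vnorm_def L2_set_def)
qed

lemma cinner_add_right:
  "x \<in> carrier_vec n \<Longrightarrow> y \<in> carrier_vec n \<Longrightarrow> z \<in> carrier_vec n
    \<Longrightarrow> cinner x (y + z) = cinner x y + cinner x z"
  unfolding cinner_def by (simp add: distrib_left sum.distrib)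

lemma cinner_add_left:
  "x \<in> carrier_vec n \<Longrightarrow> y \<in> carrier_vec n \<Longrightarrow> z \<in> carrier_vec n
    \<Longrightarrow> cinner (y + z) x = cinner y x + cinner z x"
  unfolding cinner_def by (simp add: distrib_right sum.distrib)

lemma cinner_diff_right:
  "x \<in> carrier_vec n \<Longrightarrow> y \<in> carrier_vec n \<Longrightarrow> z \<in> carrier_vec n
    \<Longrightarrow> cinner x (y - z) = cinner x y - cinner x z"
  unfolding cinner_def by (simp add: right_diff_distrib sum_subtractf)

lemma cinner_zero_right: "x \<in> carrier_vec n \<Longrightarrow> cinner x (0\<^sub>v n) = 0"
  unfolding cinner_def by simp

lemma cinner_unit_vec_left: "j < n \<Longrightarrow> v \<in> carrier_vec n \<Longrightarrow> cinner (unit_vec n j) v = v $ j"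
  unfolding cinner_def
  by (simp add: if_distrib[of cnj] if_distrib[of "\<lambda>z. z * _"] cong: if_cong)

lemma vnorm_eq_1I: "cinner x x = 1 \<Longrightarrow> vnorm x = 1"
  using vnorm_sq_eq_Re_cinner[of x] vnorm_nonneg[of x] by (simp add: power2_eq_1_iff)

lemma vnorm_unit_vec: "j < n \<Longrightarrow> vnorm (unit_vec n j) = 1"
  by (rule vnorm_eq_1I) (simp add: cinner_unit_vec_left)

lemma mult_unit_vec_index:
  "(M :: 'a :: semiring_1 mat) \<in> carrier_mat r c \<Longrightarrow> i < r \<Longrightarrow> j < c
    \<Longrightarrow> (M *\<^sub>v unit_vec c j) $ i = M $$ (i, j)"
  using scalar_prod_right_unit[of j c "row M i"] by auto

section \<open>Kronecker products of vectors\<close>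

lemma mult_add_less:
  fixes a b n k :: nat
  assumes "a < n" "b < k"
  shows "a * k + b < n * k"
proof -
  have "a * k + b < (a + 1) * k" using assms(2) by simp
  also have "\<dots> \<le> n * k" using assms(1) by (intro mult_le_mono1) simp
  finally show ?thesis .
qed

lemma sum_lessThan_mult:
  fixes n k :: nat
  shows "(\<Sum>c<n * k. f c) = (\<Sum>a<n. \<Sum>b<k. f (a * k + b))"
proof -
  have "(\<Sum>c<n * k. f c) = (\<Sum>a<n. sum f {a * k..<a * k + k})"
    by (rule sum.nat_group[symmetric])
  also have "\<dots> = (\<Sum>a<n. \<Sum>b<k. f (a * k + b))"
    by (rule sum.cong[OF refl]) (simp add: sum.atLeastLessThan_shift_0[where m = "_ * k"] lessThan_atLeast0 add.commute)
  finally show ?thesis .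
qed

definition vkron :: "complex vec \<Rightarrow> complex vec \<Rightarrow> complex vec" where
  "vkron x y = vec (dim_vec x * dim_vec y) (\<lambda>c. x $ (c div dim_vec y) * y $ (c mod dim_vec y))"

lemma dim_vkron [simp]: "dim_vec (vkron x y) = dim_vec x * dim_vec y"
  unfolding vkron_def by simp

lemma vkron_carrier: "x \<in> carrier_vec n \<Longrightarrow> y \<in> carrier_vec k \<Longrightarrow> vkron x y \<in> carrier_vec (n * k)"
  by (intro carrier_vecI) (simp add: carrier_vecD)

lemma index_vkron:
  assumes "x \<in> carrier_vec n" "y \<in> carrier_vec k" "a < n" "b < k"
  shows "vkron x y $ (a * k + b) = x $ a * y $ b"
proof -
  have dims: "dim_vec x = n" "dim_vec y = k"
    using assms(1,2) by auto
  have "(a * k + b) div k = a" "(a * k + b) mod k = b"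
    using assms(4) by simp_all
  moreover have "a * k + b < n * k"
    using assms(3,4) by (rule mult_add_less)
  ultimately show ?thesis
    unfolding vkron_def dims by simp
qed

lemma vkron_zero_right: "vkron x (0\<^sub>v k) = 0\<^sub>v (dim_vec x * k)"
proof (rule eq_vecI)
  fix c assume "c < dim_vec (0\<^sub>v (dim_vec x * k) :: complex vec)"
  then have "c mod k < k" by (cases k) simp_all
  then show "vkron x (0\<^sub>v k) $ c = 0\<^sub>v (dim_vec x * k) $ c"
    using \<open>c < _\<close> unfolding vkron_def by simp
qed simp

lemma cinner_vkron:
  assumes x: "x \<in> carrier_vec n" "x' \<in> carrier_vec n" and y: "y \<in> carrier_vec k" "y' \<in> carrier_vec k"
  shows "cinner (vkron x y) (vkron x' y') = cinner x x' * cinner y y'"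
proof -
  have "cinner (vkron x y) (vkron x' y')
      = (\<Sum>a<n. \<Sum>b<k. cnj (x $ a * y $ b) * (x' $ a * y' $ b))"
    unfolding cinner_def dim_vkron carrier_vecD[OF x(1)] carrier_vecD[OF y(1)] sum_lessThan_mult
    by (intro sum.cong refl) (simp add: index_vkron[OF x(1) y(1)] index_vkron[OF x(2) y(2)])
  also have "\<dots> = cinner x x' * cinner y y'"
    unfolding cinner_def carrier_vecD[OF x(1)] carrier_vecD[OF y(1)] sum_product
    by (simp add: mult_ac)
  finally show ?thesis .
qed

lemma vnorm_vkron:
  assumes "x \<in> carrier_vec n" "y \<in> carrier_vec k"
  shows "vnorm (vkron x y) = vnorm x * vnorm y"
proof -
  have "complex_of_real ((vnorm (vkron x y))\<^sup>2) = complex_of_real ((vnorm x * vnorm y)\<^sup>2)"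
    using cinner_vkron[OF assms(1,1) assms(2,2)] by (simp add: cinner_self power_mult_distrib)
  then have "(vnorm (vkron x y))\<^sup>2 = (vnorm x * vnorm y)\<^sup>2"
    by (simp only: of_real_eq_iff)
  then show ?thesis
    by (simp add: vnorm_def power2_eq_iff_nonneg sum_nonneg)
qed

lemma index_kron:
  assumes "A \<in> carrier_mat r1 c1" "B \<in> carrier_mat r2 c2"
    and "a < r1" "b < r2" "a' < c1" "b' < c2"
  shows "kron A B $$ (a * r2 + b, a' * c2 + b') = A $$ (a, a') * B $$ (b, b')"
proof -
  have "(a * r2 + b) div r2 = a" "(a * r2 + b) mod r2 = b" "(a' * c2 + b') div c2 = a'" "(a' * c2 + b') mod c2 = b'"
    using assms(4,6) by simp_all
  moreover have "a * r2 + b < dim_row A * dim_row B" "a' * c2 + b' < dim_col A * dim_col B"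
    using assms mult_add_less[of a r1 b r2] mult_add_less[of a' c1 b' c2] by auto
  ultimately show ?thesis
    using assms(1,2) unfolding kron_def by (simp only: index_mat carrier_matD split)
qed

lemma kron_carrier:
  "A \<in> carrier_mat r1 c1 \<Longrightarrow> B \<in> carrier_mat r2 c2 \<Longrightarrow> kron A B \<in> carrier_mat (r1 * r2) (c1 * c2)"
  unfolding kron_def by auto

lemma kron_mult_vkron:
  assumes A: "A \<in> carrier_mat r1 c1" and B: "B \<in> carrier_mat r2 c2"
    and x: "x \<in> carrier_vec c1" and y: "y \<in> carrier_vec c2"
  shows "kron A B *\<^sub>v vkron x y = vkron (A *\<^sub>v x) (B *\<^sub>v y)"
proof (rule eq_vecI)
  fix i assume "i < dim_vec (vkron (A *\<^sub>v x) (B *\<^sub>v y))"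
  then have i: "i < r1 * r2" using A B by simp
  then have "0 < r2" by (cases r2) simp_all
  define a b where "a = i div r2" and "b = i mod r2"
  have ab: "a < r1" "b < r2" "i = a * r2 + b"
    using i \<open>0 < r2\<close> unfolding a_def b_def by (auto simp: less_mult_imp_div_less)
  have "(kron A B *\<^sub>v vkron x y) $ i = (\<Sum>c<c1 * c2. kron A B $$ (i, c) * vkron x y $ c)"
    using i kron_carrier[OF A B] x y
    by (auto simp: scalar_prod_def lessThan_atLeast0 intro!: sum.cong)
  also have "\<dots> = (\<Sum>a'<c1. \<Sum>b'<c2. (A $$ (a, a') * x $ a') * (B $$ (b, b') * y $ b'))"
    unfolding sum_lessThan_mult ab(3)
    by (intro sum.cong refl) (simp add: index_kron[OF A B ab(1,2)] index_vkron[OF x y] mult_ac)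
  also have "\<dots> = (A *\<^sub>v x) $ a * (B *\<^sub>v y) $ b"
    using A B x y ab(1,2) by (simp add: sum_product scalar_prod_def lessThan_atLeast0)
  also have "\<dots> = vkron (A *\<^sub>v x) (B *\<^sub>v y) $ i"
    unfolding ab(3) using A B x y ab(1,2) by (simp add: index_vkron[of _ r1 _ r2])
  finally show "(kron A B *\<^sub>v vkron x y) $ i = vkron (A *\<^sub>v x) (B *\<^sub>v y) $ i" .
qed (use A B kron_carrier[OF A B] in auto)

section \<open>Sums of matrices, adjoints and norms\<close>

lemma mult_mat_zero_vec: "A \<in> carrier_mat r c \<Longrightarrow> A *\<^sub>v 0\<^sub>v c = 0\<^sub>v r"
  by (intro eq_vecI) auto

lemma msum_carrier: "msum N f I \<in> carrier_mat N N"
  unfolding msum_def by simp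

lemma index_msum: "i < N \<Longrightarrow> j < N \<Longrightarrow> msum N f I $$ (i, j) = (\<Sum>k\<in>I. f k $$ (i, j))"
  unfolding msum_def by simp

lemma msum_mult_vec:
  assumes f: "\<And>k. k \<in> I \<Longrightarrow> f k \<in> carrier_mat N N" and v: "v \<in> carrier_vec N"
  shows "msum N f I *\<^sub>v v = vec N (\<lambda>j. \<Sum>k\<in>I. (f k *\<^sub>v v) $ j)"
proof (rule eq_vecI)
  fix j assume "j < dim_vec (vec N (\<lambda>j. \<Sum>k\<in>I. (f k *\<^sub>v v) $ j))"
  then have j: "j < N" by simp
  have "(msum N f I *\<^sub>v v) $ j = (\<Sum>c<N. (\<Sum>k\<in>I. f k $$ (j, c)) * v $ c)"
    using j v msum_carrier[of N f I]
    by (auto simp: scalar_prod_def lessThan_atLeast0 index_msum intro!: sum.cong)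
  also have "\<dots> = (\<Sum>k\<in>I. \<Sum>c<N. f k $$ (j, c) * v $ c)"
    unfolding sum_distrib_right by (rule sum.swap)
  also have "\<dots> = vec N (\<lambda>j. \<Sum>k\<in>I. (f k *\<^sub>v v) $ j) $ j"
  proof -
    have "(f k *\<^sub>v v) $ j = (\<Sum>c<N. f k $$ (j, c) * v $ c)" if "k \<in> I" for k
      using f[OF that] j v by (auto simp: scalar_prod_def lessThan_atLeast0 intro!: sum.cong)
    then show ?thesis using j by simp
  qed
  finally show "(msum N f I *\<^sub>v v) $ j = vec N (\<lambda>j. \<Sum>k\<in>I. (f k *\<^sub>v v) $ j) $ j" .
qed (use msum_carrier[of N f I] in auto)

lemma cinner_msum_mult_right:
  assumes "\<And>k. k \<in> I \<Longrightarrow> f k \<in> carrier_mat N N" "v \<in> carrier_vec N" "z \<in> carrier_vec N"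
  shows "cinner z (msum N f I *\<^sub>v v) = (\<Sum>k\<in>I. cinner z (f k *\<^sub>v v))"
proof -
  have "cinner z (msum N f I *\<^sub>v v) = (\<Sum>j<N. \<Sum>k\<in>I. cnj (z $ j) * (f k *\<^sub>v v) $ j)"
    using assms by (simp add: msum_mult_vec cinner_def sum_distrib_left)
  also have "\<dots> = (\<Sum>k\<in>I. cinner z (f k *\<^sub>v v))"
    using assms(3) unfolding cinner_def by (simp add: sum.swap[of _ "{..<N}"])
  finally show ?thesis .
qed

lemma cinner_msum_mult_left:
  assumes f: "\<And>k. k \<in> I \<Longrightarrow> f k \<in> carrier_mat N N" and "v \<in> carrier_vec N" "z \<in> carrier_vec N"
  shows "cinner (msum N f I *\<^sub>v v) z = (\<Sum>k\<in>I. cinner (f k *\<^sub>v v) z)"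
proof -
  have "cinner (msum N f I *\<^sub>v v) z = cnj (\<Sum>k\<in>I. cinner z (f k *\<^sub>v v))"
    using assms msum_carrier[of N f I]
    by (simp add: cinner_commute[of "msum N f I *\<^sub>v v" z] cinner_msum_mult_right)
  also have "\<dots> = (\<Sum>k\<in>I. cinner (f k *\<^sub>v v) z)"
  proof -
    have "cinner (f k *\<^sub>v v) z = cnj (cinner z (f k *\<^sub>v v))" if "k \<in> I" for k
      using f[OF that] assms(2,3) by (intro cinner_commute) auto
    then show ?thesis by simp
  qed
  finally show ?thesis .
qed

lemma cinner_msum_self:
  assumes f: "\<And>k. k \<in> I \<Longrightarrow> f k \<in> carrier_mat N N" and v: "v \<in> carrier_vec N"
  shows "cinner (msum N f I *\<^sub>v v) (msum N f I *\<^sub>v v)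
    = (\<Sum>i\<in>I. \<Sum>k\<in>I. cinner (f i *\<^sub>v v) (f k *\<^sub>v v))"
proof -
  have Mv: "msum N f I *\<^sub>v v \<in> carrier_vec N"
    by (rule mult_mat_vec_carrier[OF msum_carrier v])
  have "cinner (msum N f I *\<^sub>v v) (msum N f I *\<^sub>v v)
      = (\<Sum>k\<in>I. cinner (msum N f I *\<^sub>v v) (f k *\<^sub>v v))"
    by (rule cinner_msum_mult_right[OF f v Mv])
  also have "\<dots> = (\<Sum>k\<in>I. \<Sum>i\<in>I. cinner (f i *\<^sub>v v) (f k *\<^sub>v v))"
    by (intro sum.cong refl cinner_msum_mult_left[OF f v] mult_mat_vec_carrier[OF f v])
  also have "\<dots> = (\<Sum>i\<in>I. \<Sum>k\<in>I. cinner (f i *\<^sub>v v) (f k *\<^sub>v v))"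
    by (rule sum.swap)
  finally show ?thesis .
qed

lemma ctrans_carrier: "A \<in> carrier_mat r c \<Longrightarrow> ctrans A \<in> carrier_mat c r"
  unfolding ctrans_def by auto

lemma index_ctrans: "i < dim_col A \<Longrightarrow> j < dim_row A \<Longrightarrow> ctrans A $$ (i, j) = cnj (A $$ (j, i))"
  unfolding ctrans_def by simp

lemma cinner_ctrans_right:
  assumes M: "M \<in> carrier_mat r c" and x: "x \<in> carrier_vec c" and y: "y \<in> carrier_vec r"
  shows "cinner x (ctrans M *\<^sub>v y) = cinner (M *\<^sub>v x) y"
proof -
  have "cinner x (ctrans M *\<^sub>v y) = (\<Sum>a<c. \<Sum>b<r. cnj (x $ a) * cnj (M $$ (b, a)) * y $ b)"
    using assms ctrans_carrier[OF M] unfolding cinner_def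
    by (auto simp: scalar_prod_def lessThan_atLeast0 sum_distrib_left index_ctrans mult.assoc intro!: sum.cong)
  also have "\<dots> = (\<Sum>b<r. \<Sum>a<c. cnj (x $ a) * cnj (M $$ (b, a)) * y $ b)"
    by (rule sum.swap)
  also have "\<dots> = cinner (M *\<^sub>v x) y"
    using assms unfolding cinner_def
    by (auto simp: scalar_prod_def lessThan_atLeast0 sum_distrib_left sum_distrib_right mult_ac intro!: sum.cong)
  finally show ?thesis .
qed

lemma hermitian_matD:
  assumes "hermitian_mat A"
  shows "A \<in> carrier_mat (dim_row A) (dim_row A)" "ctrans A = A"
  using assms unfolding hermitian_mat_def by auto

lemma cinner_hermitian:
  assumes "hermitian_mat A" "x \<in> carrier_vec (dim_row A)" "y \<in> carrier_vec (dim_row A)"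
  shows "cinner (A *\<^sub>v x) y = cinner x (A *\<^sub>v y)"
  using cinner_ctrans_right[OF hermitian_matD(1)[OF assms(1)] assms(2,3)] hermitian_matD(2)[OF assms(1)]
  by simp

lemma hermitian_index_cnj:
  assumes "hermitian_mat A" "i < dim_row A" "j < dim_row A"
  shows "cnj (A $$ (j, i)) = A $$ (i, j)"
proof -
  have "dim_col A = dim_row A"
    using hermitian_matD(1)[OF assms(1)] by (rule carrier_matD(2))
  then have "ctrans A $$ (i, j) = cnj (A $$ (j, i))"
    using assms(2,3) by (intro index_ctrans) simp_all
  then show ?thesis
    unfolding hermitian_matD(2)[OF assms(1)] by (rule sym)
qed

lemma hermitian_shift:
  assumes A: "A \<in> carrier_mat n n" and herm: "hermitian_mat A"
  shows "hermitian_mat (A - complex_of_real c \<cdot>\<^sub>m 1\<^sub>m n)"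
proof -
  let ?S = "A - complex_of_real c \<cdot>\<^sub>m 1\<^sub>m n"
  have S: "?S \<in> carrier_mat n n"
    using A by (intro minus_carrier_mat) simp
  have "ctrans ?S = ?S"
  proof (rule eq_matI)
    fix i j assume "i < dim_row ?S" "j < dim_col ?S"
    then have ij: "i < n" "j < n" using S by auto
    have "ctrans ?S $$ (i, j) = cnj (?S $$ (j, i))"
      using ij S by (intro index_ctrans) auto
    also have "\<dots> = cnj (A $$ (j, i)) - complex_of_real c * (if j = i then 1 else 0)"
      using ij A by simp
    also have "cnj (A $$ (j, i)) = A $$ (i, j)"
      by (rule hermitian_index_cnj[OF herm]) (use ij A in auto)
    finally show "ctrans ?S $$ (i, j) = ?S $$ (i, j)"
      using ij A by auto
  qed (use S ctrans_carrier[OF S] in auto)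
  then show ?thesis
    unfolding hermitian_mat_def using S by auto
qed

lemma commutator_shift:
  fixes A B :: "complex mat"
  assumes A: "A \<in> carrier_mat n n" and B: "B \<in> carrier_mat n n"
  shows "(A - a \<cdot>\<^sub>m 1\<^sub>m n) * (B - b \<cdot>\<^sub>m 1\<^sub>m n) - (B - b \<cdot>\<^sub>m 1\<^sub>m n) * (A - a \<cdot>\<^sub>m 1\<^sub>m n)
    = A * B - B * A"
proof -
  have expand:
    "(C - c \<cdot>\<^sub>m 1\<^sub>m n) * (D - d \<cdot>\<^sub>m 1\<^sub>m n) = C * D - d \<cdot>\<^sub>m C - c \<cdot>\<^sub>m (D - d \<cdot>\<^sub>m 1\<^sub>m n)"
    if C: "C \<in> carrier_mat n n" and D: "D \<in> carrier_mat n n" for C D :: "complex mat" and c d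
  proof -
    have dI: "d \<cdot>\<^sub>m 1\<^sub>m n \<in> carrier_mat n n" by simp
    have D': "D - d \<cdot>\<^sub>m 1\<^sub>m n \<in> carrier_mat n n" using dI by (rule minus_carrier_mat)
    have "(C - c \<cdot>\<^sub>m 1\<^sub>m n) * (D - d \<cdot>\<^sub>m 1\<^sub>m n)
        = C * (D - d \<cdot>\<^sub>m 1\<^sub>m n) - (c \<cdot>\<^sub>m 1\<^sub>m n) * (D - d \<cdot>\<^sub>m 1\<^sub>m n)"
      using C D' by (intro minus_mult_distrib_mat) auto
    also have "C * (D - d \<cdot>\<^sub>m 1\<^sub>m n) = C * D - d \<cdot>\<^sub>m C"
      using mult_minus_distrib_mat[OF C D dI] mult_smult_distrib[OF C one_carrier_mat] C by simp
    also have "(c \<cdot>\<^sub>m 1\<^sub>m n) * (D - d \<cdot>\<^sub>m 1\<^sub>m n) = c \<cdot>\<^sub>m (D - d \<cdot>\<^sub>m 1\<^sub>m n)"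
      using mult_smult_assoc_mat[OF one_carrier_mat D'] D' by simp
    finally show ?thesis .
  qed
  show ?thesis
    unfolding expand[OF A B] expand[OF B A] using A B
    by (intro eq_matI) (auto simp: right_diff_distrib mult.commute)
qed

lemma cmod_index_le_vnorm:
  assumes "i < dim_vec x"
  shows "cmod (x $ i) \<le> vnorm x"
  unfolding vnorm_def using assms
  by (intro real_le_rsqrt member_le_sum) auto

lemma sigma_min_le_vnorm_mult:
  assumes "x \<in> carrier_vec (dim_col M)" "vnorm x = 1"
  shows "sigma_min M \<le> vnorm (M *\<^sub>v x)"
  unfolding sigma_min_def
  by (rule cInf_lower) (use assms in \<open>auto simp: vnorm_def intro!: bdd_belowI[where m = 0] sum_nonneg\<close>)

lemma vnorm_mult_le_opnorm:
  assumes "x \<in> carrier_vec (dim_col M)" "vnorm x = 1"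
  shows "vnorm (M *\<^sub>v x) \<le> opnorm M"
  unfolding opnorm_def
proof (rule cSup_upper)
  show "vnorm (M *\<^sub>v x) \<in> {vnorm (M *\<^sub>v x) |x. x \<in> carrier_vec (dim_col M) \<and> vnorm x = 1}"
    using assms by auto
  define b where "b = sqrt (\<Sum>a<dim_row M. (\<Sum>c<dim_col M. cmod (M $$ (a, c)))\<^sup>2)"
  have "vnorm (M *\<^sub>v y) \<le> b" if y: "y \<in> carrier_vec (dim_col M)" "vnorm y = 1" for y
  proof -
    have "cmod ((M *\<^sub>v y) $ a) \<le> (\<Sum>c<dim_col M. cmod (M $$ (a, c)))" if a: "a < dim_row M" for a
    proof -
      have "cmod ((M *\<^sub>v y) $ a) \<le> (\<Sum>c<dim_col M. cmod (M $$ (a, c)) * cmod (y $ c))"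
        using a y by (auto simp: scalar_prod_def lessThan_atLeast0 norm_mult intro: order.trans[OF norm_sum])
      also have "\<dots> \<le> (\<Sum>c<dim_col M. cmod (M $$ (a, c)))"
        using y cmod_index_le_vnorm[of _ y] by (intro sum_mono) (auto intro: mult_left_le)
      finally show ?thesis .
    qed
    then show ?thesis
      unfolding vnorm_def b_def by (auto intro!: sum_mono power_mono)
  qed
  then show "bdd_above {vnorm (M *\<^sub>v x) |x. x \<in> carrier_vec (dim_col M) \<and> vnorm x = 1}"
    by (auto intro!: bdd_aboveI[where M = b])
qed

lemma cinner_mult_le_opnorm:
  assumes "M \<in> carrier_mat N N" "v \<in> carrier_vec N" "vnorm v = 1"
  shows "cmod (cinner v (M *\<^sub>v v)) \<le> opnorm M"
proof -
  have "cmod (cinner v (M *\<^sub>v v)) \<le> vnorm v * vnorm (M *\<^sub>v v)"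
    using assms by (intro cinner_Cauchy_Schwarz) auto
  also have "\<dots> \<le> opnorm M"
    using assms vnorm_mult_le_opnorm[of v M] by simp
  finally show ?thesis .
qed

lemma cinner_plus_ctrans:
  assumes M: "M \<in> carrier_mat N N" and v: "v \<in> carrier_vec N"
  shows "cinner v ((M + ctrans M) *\<^sub>v v) = cinner v (M *\<^sub>v v) + cnj (cinner v (M *\<^sub>v v))"
proof -
  have "(M + ctrans M) *\<^sub>v v = M *\<^sub>v v + ctrans M *\<^sub>v v"
    by (rule add_mult_distrib_mat_vec[OF M ctrans_carrier[OF M] v])
  then show ?thesis
    using M v ctrans_carrier[OF M]
    by (simp add: cinner_add_right[of v N] cinner_ctrans_right[OF M v v] cinner_commute[of v "M *\<^sub>v v"])
qed

lemma shift_mult_vec: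
  fixes A :: "complex mat"
  assumes "A \<in> carrier_mat n n" "v \<in> carrier_vec n"
  shows "(A - c \<cdot>\<^sub>m 1\<^sub>m n) *\<^sub>v v = A *\<^sub>v v - c \<cdot>\<^sub>v v"
proof -
  have "(c \<cdot>\<^sub>m 1\<^sub>m n) *\<^sub>v v = c \<cdot>\<^sub>v v"
    by (rule eq_vecI) (use assms(2) in \<open>auto simp: scalar_prod_def sum.delta'
        if_distrib[of "\<lambda>x. x * _"] if_distrib[of "\<lambda>x. _ * x"] cong: if_cong\<close>)
  then show ?thesis
    using assms by (simp add: minus_mult_distrib_mat_vec[OF assms(1) _ assms(2)])
qed

section \<open>Off-diagonal sums\<close>

definition offdiag :: "nat \<Rightarrow> (nat \<times> nat) set" where
  "offdiag d = {(i, k). i < d \<and> k < d \<and> i \<noteq> k}"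

lemma sum_square_diag_offdiag:
  "(\<Sum>i<d. \<Sum>k<d. f i k) = (\<Sum>i<d. f i i) + (\<Sum>(i, k)\<in>offdiag d. f i k)"
proof -
  have "(\<Sum>i<d. \<Sum>k<d. f i k) = (\<Sum>i<d. f i i + (\<Sum>k\<in>{..<d} - {i}. f i k))"
    by (intro sum.cong refl) (rule sum.remove, auto)
  also have "\<dots> = (\<Sum>i<d. f i i) + (\<Sum>(i, k)\<in>Sigma {..<d} (\<lambda>i. {..<d} - {i}). f i k)"
    by (simp add: sum.distrib sum.Sigma)
  also have "Sigma {..<d} (\<lambda>i. {..<d} - {i}) = offdiag d"
    unfolding offdiag_def by auto
  finally show ?thesis .
qed

lemma sum_offdiag_swap: "(\<Sum>(i, k)\<in>offdiag d. f i k) = (\<Sum>(i, k)\<in>offdiag d. f k i)"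
  unfolding offdiag_def
  by (rule sum.reindex_bij_witness[where i = "\<lambda>(i, k). (k, i)" and j = "\<lambda>(i, k). (k, i)"]) auto

lemma offdiag_antisym_bound:
  fixes C U :: "nat \<Rightarrow> nat \<Rightarrow> complex" and E :: "nat \<Rightarrow> nat \<Rightarrow> real"
  assumes antisym: "\<And>i k. (i, k) \<in> offdiag d \<Longrightarrow> C k i = - C i k"
    and C_le: "\<And>i k. (i, k) \<in> offdiag d \<Longrightarrow> cmod (C i k) \<le> 1"
    and U_le: "\<And>i k. (i, k) \<in> offdiag d \<Longrightarrow> cmod (U i k - U k i) \<le> E i k"
  shows "2 * cmod (\<Sum>(i, k)\<in>offdiag d. C i k * U i k) \<le> (\<Sum>(i, k)\<in>offdiag d. E i k)"
proof -
  let ?S = "\<Sum>(i, k)\<in>offdiag d. C i k * U i k"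
  have "2 * ?S = ?S + (\<Sum>(i, k)\<in>offdiag d. C k i * U k i)"
    using sum_offdiag_swap[of "\<lambda>i k. C i k * U i k" d] by simp
  also have "\<dots> = (\<Sum>(i, k)\<in>offdiag d. C i k * (U i k - U k i))"
    unfolding sum.distrib[symmetric]
  proof (rule sum.cong[OF refl], clarify)
    fix i k assume "(i, k) \<in> offdiag d"
    then show "C i k * U i k + C k i * U k i = C i k * (U i k - U k i)"
      using antisym[of i k] by (simp add: algebra_simps)
  qed
  finally have twice: "2 * ?S = (\<Sum>(i, k)\<in>offdiag d. C i k * (U i k - U k i))" .
  have "2 * cmod ?S = cmod (2 * ?S)"
    by (simp add: norm_mult)
  also have "\<dots> \<le> (\<Sum>(i, k)\<in>offdiag d. cmod (C i k) * cmod (U i k - U k i))"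
    unfolding twice case_prod_beta by (rule order.trans[OF norm_sum]) (simp add: norm_mult)
  also have "\<dots> \<le> (\<Sum>(i, k)\<in>offdiag d. E i k)"
  proof (rule sum_mono, clarify)
    fix i k assume ik: "(i, k) \<in> offdiag d"
    have "cmod (C i k) * cmod (U i k - U k i) \<le> 1 * E i k"
      using C_le[OF ik] U_le[OF ik] by (intro mult_mono) auto
    then show "cmod (C i k) * cmod (U i k - U k i) \<le> E i k" by simp
  qed
  finally show ?thesis .
qed


section \<open>The localizer on a product test vector\<close>

lemma Pmat_carrier: "Pmat m \<in> carrier_mat (2 * m) (2 * m)"
  and Qmat_carrier: "Qmat m \<in> carrier_mat (2 * m) (2 * m)"
  unfolding Pmat_def Qmat_def by simp_all

lemma Pmat_mult_unit_vec0:
  assumes "0 < m"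
  shows "Pmat m *\<^sub>v unit_vec (2 * m) 0 = unit_vec (2 * m) 0"
proof (rule eq_vecI)
  fix i assume "i < dim_vec (unit_vec (2 * m) 0 :: complex vec)"
  then show "(Pmat m *\<^sub>v unit_vec (2 * m) 0) $ i = unit_vec (2 * m) 0 $ i"
    using assms by (simp add: mult_unit_vec_index[OF Pmat_carrier] Pmat_def)
qed (simp add: Pmat_def)

lemma Qmat_mult_unit_vec0:
  assumes "0 < m"
  shows "Qmat m *\<^sub>v unit_vec (2 * m) 0 = 0\<^sub>v (2 * m)"
proof (rule eq_vecI)
  fix i assume i: "i < dim_vec (0\<^sub>v (2 * m) :: complex vec)"
  then show "(Qmat m *\<^sub>v unit_vec (2 * m) 0) $ i = 0\<^sub>v (2 * m) $ i"
    using assms by (cases "i = 0") (simp_all add: mult_unit_vec_index[OF Qmat_carrier] Qmat_def)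
qed (simp add: Qmat_def)

locale clifford_localizer =
  fixes n m :: nat and Gs As :: "complex mat list" and B :: "complex mat"
    and lam :: "real list" and nu :: complex
  assumes m_pos: "0 < m"
    and length_Gs: "length Gs = length As"
    and clifford: "clifford_rep m Gs"
    and As: "\<forall>i<length As. As!i \<in> carrier_mat n n \<and> hermitian_mat (As!i)"
    and B: "B \<in> carrier_mat n n"
begin

definition shiftA :: "nat \<Rightarrow> complex mat" where
  "shiftA i = As!i - complex_of_real (lam!i) \<cdot>\<^sub>m 1\<^sub>m n"

definition shiftB :: "complex mat" where
  "shiftB = B - nu \<cdot>\<^sub>m 1\<^sub>m n"

definition clifford_sum :: "complex mat" where
  "clifford_sum = msum (n * (2 * m)) (\<lambda>i. kron (shiftA i) (Gs!i)) {..<length As}"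

definition Gmat :: "nat \<Rightarrow> complex mat" where
  "Gmat i = kron (shiftA i * shiftB) (Gs!i * Pmat m)"

definition Hmat :: "nat \<Rightarrow> complex mat" where
  "Hmat i = kron (shiftA i * ctrans shiftB) (Gs!i * Qmat m)"

abbreviation e0 :: "complex vec" where
  "e0 \<equiv> unit_vec (2 * m) 0"

lemma localizer_eq:
  "localizer m Gs As B lam nu = clifford_sum + kron shiftB (Pmat m) - kron (ctrans shiftB) (Qmat m)"
  using B unfolding localizer_def clifford_sum_def shiftA_def shiftB_def Let_def by simp

lemma Fmat_eq:
  "Fmat m Gs As B lam nu = msum (n * (2 * m)) (\<lambda>i. Gmat i + ctrans (Gmat i)) {..<length As}
     - msum (n * (2 * m)) (\<lambda>i. Hmat i + ctrans (Hmat i)) {..<length As}"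
  using B unfolding Fmat_def Gmat_def Hmat_def shiftA_def shiftB_def Let_def by simp

lemma As_carrier: "i < length As \<Longrightarrow> As!i \<in> carrier_mat n n"
  and As_hermitian: "i < length As \<Longrightarrow> hermitian_mat (As!i)"
  using As by blast+

lemma Gs_carrier: "i < length As \<Longrightarrow> Gs!i \<in> carrier_mat (2 * m) (2 * m)"
  and Gs_hermitian: "i < length As \<Longrightarrow> hermitian_mat (Gs!i)"
  and Gs_square: "i < length As \<Longrightarrow> Gs!i * Gs!i = 1\<^sub>m (2 * m)"
  and Gs_anticommute:
    "i < length As \<Longrightarrow> k < length As \<Longrightarrow> i \<noteq> k \<Longrightarrow> Gs!i * Gs!k = - (Gs!k * Gs!i)"
  using clifford unfolding clifford_rep_def length_Gs by blast+

lemma shiftA_carrier: "shiftA i \<in> carrier_mat n n"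
  unfolding shiftA_def by (intro minus_carrier_mat) simp

lemma shiftB_carrier: "shiftB \<in> carrier_mat n n"
  unfolding shiftB_def by (intro minus_carrier_mat) simp

lemma shiftA_hermitian: "i < length As \<Longrightarrow> hermitian_mat (shiftA i)"
  unfolding shiftA_def using As_carrier As_hermitian by (rule hermitian_shift)

lemma e0_carrier: "e0 \<in> carrier_vec (2 * m)"
  by simp

lemma localizer_carrier: "localizer m Gs As B lam nu \<in> carrier_mat (n * (2 * m)) (n * (2 * m))"
  unfolding localizer_eq
  by (rule minus_carrier_mat[OF kron_carrier[OF ctrans_carrier[OF shiftB_carrier] Qmat_carrier]])

lemma Fmat_carrier: "Fmat m Gs As B lam nu \<in> carrier_mat (n * (2 * m)) (n * (2 * m))"
  unfolding Fmat_eq by (rule minus_carrier_mat[OF msum_carrier])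

lemma kron_shiftA_carrier:
  "i < length As \<Longrightarrow> kron (shiftA i) (Gs!i) \<in> carrier_mat (n * (2 * m)) (n * (2 * m))"
  by (rule kron_carrier[OF shiftA_carrier Gs_carrier])

lemma Gmat_carrier: "i < length As \<Longrightarrow> Gmat i \<in> carrier_mat (n * (2 * m)) (n * (2 * m))"
  unfolding Gmat_def
  by (rule kron_carrier[OF mult_carrier_mat[OF shiftA_carrier shiftB_carrier]
        mult_carrier_mat[OF Gs_carrier Pmat_carrier]])

lemma Hmat_carrier: "i < length As \<Longrightarrow> Hmat i \<in> carrier_mat (n * (2 * m)) (n * (2 * m))"
  unfolding Hmat_def
  by (rule kron_carrier[OF mult_carrier_mat[OF shiftA_carrier ctrans_carrier[OF shiftB_carrier]]
        mult_carrier_mat[OF Gs_carrier Qmat_carrier]])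

lemma cinner_e0_Gs:
  assumes "i < length As"
  shows "cinner e0 (Gs!i *\<^sub>v e0) = Gs!i $$ (0, 0)" "cinner (Gs!i *\<^sub>v e0) e0 = Gs!i $$ (0, 0)"
proof -
  show left: "cinner e0 (Gs!i *\<^sub>v e0) = Gs!i $$ (0, 0)"
    using Gs_carrier[OF assms] m_pos by (simp add: cinner_unit_vec_left mult_unit_vec_index)
  show "cinner (Gs!i *\<^sub>v e0) e0 = Gs!i $$ (0, 0)"
    using cinner_hermitian[OF Gs_hermitian[OF assms]] Gs_carrier[OF assms] left by simp
qed

lemma Gs_index_real: "i < length As \<Longrightarrow> cnj (Gs!i $$ (0, 0)) = Gs!i $$ (0, 0)"
  using hermitian_index_cnj[OF Gs_hermitian, of i 0 0] Gs_carrier[of i] m_pos by simp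

lemma clifford_gram:
  assumes "i < length As" "k < length As"
  shows "cinner (Gs!i *\<^sub>v e0) (Gs!k *\<^sub>v e0) = (Gs!i * Gs!k) $$ (0, 0)"
proof -
  have prod: "Gs!i * Gs!k \<in> carrier_mat (2 * m) (2 * m)"
    using Gs_carrier[OF assms(1)] Gs_carrier[OF assms(2)] by simp
  have "cinner (Gs!i *\<^sub>v e0) (Gs!k *\<^sub>v e0) = cinner e0 ((Gs!i * Gs!k) *\<^sub>v e0)"
    using cinner_hermitian[OF Gs_hermitian[OF assms(1)]] Gs_carrier[OF assms(1)] Gs_carrier[OF assms(2)]
    by simp
  also have "\<dots> = ((Gs!i * Gs!k) *\<^sub>v e0) $ 0"
    using prod m_pos by (intro cinner_unit_vec_left) auto
  also have "\<dots> = (Gs!i * Gs!k) $$ (0, 0)"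
    by (rule mult_unit_vec_index[OF prod]) (use m_pos in auto)
  finally show ?thesis .
qed

lemma clifford_gram_diag: "i < length As \<Longrightarrow> cinner (Gs!i *\<^sub>v e0) (Gs!i *\<^sub>v e0) = 1"
  using clifford_gram Gs_square m_pos by simp

lemma clifford_gram_antisym:
  assumes "i < length As" "k < length As" "i \<noteq> k"
  shows "cinner (Gs!k *\<^sub>v e0) (Gs!i *\<^sub>v e0) = - cinner (Gs!i *\<^sub>v e0) (Gs!k *\<^sub>v e0)"
  using clifford_gram[OF assms(1,2)] clifford_gram[OF assms(2,1)] Gs_anticommute[OF assms]
    Gs_carrier[OF assms(1)] Gs_carrier[OF assms(2)] m_pos
  by simp

lemma clifford_gram_le_1:
  assumes "i < length As" "k < length As"
  shows "cmod (cinner (Gs!i *\<^sub>v e0) (Gs!k *\<^sub>v e0)) \<le> 1"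
  using cinner_Cauchy_Schwarz[of "Gs!k *\<^sub>v e0" "Gs!i *\<^sub>v e0"]
    vnorm_eq_1I[OF clifford_gram_diag[OF assms(1)]] vnorm_eq_1I[OF clifford_gram_diag[OF assms(2)]]
    Gs_carrier[OF assms(1)] Gs_carrier[OF assms(2)]
  by simp

lemma cinner_shiftA_commutator:
  assumes psi: "psi \<in> carrier_vec n" and ik: "i < length As" "k < length As"
  shows "cinner (shiftA i *\<^sub>v psi) (shiftA k *\<^sub>v psi) - cinner (shiftA k *\<^sub>v psi) (shiftA i *\<^sub>v psi)
       = cinner psi ((As!i * As!k - As!k * As!i) *\<^sub>v psi)"
proof -
  have swap: "cinner (shiftA a *\<^sub>v psi) (shiftA b *\<^sub>v psi) = cinner psi ((shiftA a * shiftA b) *\<^sub>v psi)"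
    if "a < length As" for a b
    using cinner_hermitian[OF shiftA_hermitian[OF that]] shiftA_carrier[of a] shiftA_carrier[of b] psi
    by simp
  have "cinner psi ((shiftA i * shiftA k) *\<^sub>v psi) - cinner psi ((shiftA k * shiftA i) *\<^sub>v psi)
      = cinner psi ((shiftA i * shiftA k - shiftA k * shiftA i) *\<^sub>v psi)"
    using shiftA_carrier[of i] shiftA_carrier[of k] psi
    by (simp add: cinner_diff_right[of psi n] minus_mult_distrib_mat_vec[of _ n n])
  also have "shiftA i * shiftA k - shiftA k * shiftA i = As!i * As!k - As!k * As!i"
    unfolding shiftA_def by (rule commutator_shift[OF As_carrier[OF ik(1)] As_carrier[OF ik(2)]])
  finally show ?thesis
    using swap ik by simp
qed

lemma clifford_offdiag_le:
  assumes psi: "psi \<in> carrier_vec n" "vnorm psi = 1"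
  shows "2 * cmod (\<Sum>(i, k)\<in>offdiag (length As).
            cinner (Gs!i *\<^sub>v e0) (Gs!k *\<^sub>v e0) * cinner (shiftA i *\<^sub>v psi) (shiftA k *\<^sub>v psi))
    \<le> (\<Sum>(i, k)\<in>offdiag (length As). opnorm (As!i * As!k - As!k * As!i))"
proof (rule offdiag_antisym_bound)
  fix i k assume "(i, k) \<in> offdiag (length As)"
  then have i: "i < length As" and k: "k < length As" and "i \<noteq> k"
    unfolding offdiag_def by auto
  show "cinner (Gs!k *\<^sub>v e0) (Gs!i *\<^sub>v e0) = - cinner (Gs!i *\<^sub>v e0) (Gs!k *\<^sub>v e0)"
    by (rule clifford_gram_antisym[OF i k \<open>i \<noteq> k\<close>])
  show "cmod (cinner (Gs!i *\<^sub>v e0) (Gs!k *\<^sub>v e0)) \<le> 1"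
    by (rule clifford_gram_le_1[OF i k])
  have "As!i * As!k - As!k * As!i \<in> carrier_mat n n"
    using As_carrier[OF i] As_carrier[OF k] by (intro minus_carrier_mat) auto
  then show "cmod (cinner (shiftA i *\<^sub>v psi) (shiftA k *\<^sub>v psi)
      - cinner (shiftA k *\<^sub>v psi) (shiftA i *\<^sub>v psi)) \<le> opnorm (As!i * As!k - As!k * As!i)"
    unfolding cinner_shiftA_commutator[OF psi(1) i k] by (rule cinner_mult_le_opnorm[OF _ psi])
qed

lemma kron_shiftA_mult_tensor:
  "psi \<in> carrier_vec n \<Longrightarrow> i < length As
    \<Longrightarrow> kron (shiftA i) (Gs!i) *\<^sub>v vkron psi e0 = vkron (shiftA i *\<^sub>v psi) (Gs!i *\<^sub>v e0)"
  by (rule kron_mult_vkron[OF shiftA_carrier Gs_carrier _ e0_carrier])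

lemma cinner_clifford_sum_tensor:
  assumes psi: "psi \<in> carrier_vec n"
  shows "cinner (clifford_sum *\<^sub>v vkron psi e0) (clifford_sum *\<^sub>v vkron psi e0)
    = (\<Sum>i<length As. \<Sum>k<length As.
         cinner (Gs!i *\<^sub>v e0) (Gs!k *\<^sub>v e0) * cinner (shiftA i *\<^sub>v psi) (shiftA k *\<^sub>v psi))"
proof -
  have T: "kron (shiftA i) (Gs!i) \<in> carrier_mat (n * (2 * m)) (n * (2 * m))" if "i \<in> {..<length As}" for i
    using that kron_shiftA_carrier by simp
  have "cinner (clifford_sum *\<^sub>v vkron psi e0) (clifford_sum *\<^sub>v vkron psi e0)
      = (\<Sum>i<length As. \<Sum>k<length As.
           cinner (kron (shiftA i) (Gs!i) *\<^sub>v vkron psi e0) (kron (shiftA k) (Gs!k) *\<^sub>v vkron psi e0))"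
    unfolding clifford_sum_def by (simp only: cinner_msum_self[OF T vkron_carrier[OF psi e0_carrier]])
  also have "\<dots> = (\<Sum>i<length As. \<Sum>k<length As.
         cinner (Gs!i *\<^sub>v e0) (Gs!k *\<^sub>v e0) * cinner (shiftA i *\<^sub>v psi) (shiftA k *\<^sub>v psi))"
  proof (intro sum.cong refl)
    fix i k assume "i \<in> {..<length As}" "k \<in> {..<length As}"
    then have i: "i < length As" and k: "k < length As" by simp_all
    show "cinner (kron (shiftA i) (Gs!i) *\<^sub>v vkron psi e0) (kron (shiftA k) (Gs!k) *\<^sub>v vkron psi e0)
      = cinner (Gs!i *\<^sub>v e0) (Gs!k *\<^sub>v e0) * cinner (shiftA i *\<^sub>v psi) (shiftA k *\<^sub>v psi)"
      unfolding kron_shiftA_mult_tensor[OF psi i] kron_shiftA_mult_tensor[OF psi k]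
        cinner_vkron[OF mult_mat_vec_carrier[OF shiftA_carrier psi] mult_mat_vec_carrier[OF shiftA_carrier psi]
          mult_mat_vec_carrier[OF Gs_carrier[OF i] e0_carrier] mult_mat_vec_carrier[OF Gs_carrier[OF k] e0_carrier]]
      by (rule mult.commute)
  qed
  finally show ?thesis .
qed

lemma cinner_clifford_sum_tensor_e0:
  assumes psi: "psi \<in> carrier_vec n" and w: "w \<in> carrier_vec n"
  shows "cinner (clifford_sum *\<^sub>v vkron psi e0) (vkron w e0)
      = (\<Sum>i<length As. Gs!i $$ (0, 0) * cinner (shiftA i *\<^sub>v psi) w)"
    and "cinner (vkron w e0) (clifford_sum *\<^sub>v vkron psi e0)
      = (\<Sum>i<length As. Gs!i $$ (0, 0) * cinner w (shiftA i *\<^sub>v psi))"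
proof -
  have phi: "vkron psi e0 \<in> carrier_vec (n * (2 * m))"
    by (rule vkron_carrier[OF psi e0_carrier])
  have we: "vkron w e0 \<in> carrier_vec (n * (2 * m))"
    by (rule vkron_carrier[OF w e0_carrier])
  have T: "kron (shiftA i) (Gs!i) \<in> carrier_mat (n * (2 * m)) (n * (2 * m))" if "i \<in> {..<length As}" for i
    using that kron_shiftA_carrier by simp
  have u: "shiftA i *\<^sub>v psi \<in> carrier_vec n" for i
    by (rule mult_mat_vec_carrier[OF shiftA_carrier psi])
  have g: "Gs!i *\<^sub>v e0 \<in> carrier_vec (2 * m)" if "i \<in> {..<length As}" for i
    using that by (intro mult_mat_vec_carrier[OF Gs_carrier e0_carrier]) simp
  have "cinner (clifford_sum *\<^sub>v vkron psi e0) (vkron w e0)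
      = (\<Sum>i<length As. cinner (kron (shiftA i) (Gs!i) *\<^sub>v vkron psi e0) (vkron w e0))"
    unfolding clifford_sum_def by (simp only: cinner_msum_mult_left[OF T phi we])
  also have "\<dots> = (\<Sum>i<length As. Gs!i $$ (0, 0) * cinner (shiftA i *\<^sub>v psi) w)"
  proof (rule sum.cong[OF refl])
    fix i assume i: "i \<in> {..<length As}"
    then show "cinner (kron (shiftA i) (Gs!i) *\<^sub>v vkron psi e0) (vkron w e0)
      = Gs!i $$ (0, 0) * cinner (shiftA i *\<^sub>v psi) w"
      using kron_shiftA_mult_tensor[OF psi] cinner_vkron[OF u w g[OF i] e0_carrier] cinner_e0_Gs(2)
      by (simp add: mult.commute)
  qed
  finally show "cinner (clifford_sum *\<^sub>v vkron psi e0) (vkron w e0)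
      = (\<Sum>i<length As. Gs!i $$ (0, 0) * cinner (shiftA i *\<^sub>v psi) w)" .
  have "cinner (vkron w e0) (clifford_sum *\<^sub>v vkron psi e0)
      = (\<Sum>i<length As. cinner (vkron w e0) (kron (shiftA i) (Gs!i) *\<^sub>v vkron psi e0))"
    unfolding clifford_sum_def by (simp only: cinner_msum_mult_right[OF T phi we])
  also have "\<dots> = (\<Sum>i<length As. Gs!i $$ (0, 0) * cinner w (shiftA i *\<^sub>v psi))"
  proof (rule sum.cong[OF refl])
    fix i assume i: "i \<in> {..<length As}"
    then show "cinner (vkron w e0) (kron (shiftA i) (Gs!i) *\<^sub>v vkron psi e0)
      = Gs!i $$ (0, 0) * cinner w (shiftA i *\<^sub>v psi)"
      using kron_shiftA_mult_tensor[OF psi] cinner_vkron[OF w u e0_carrier g[OF i]] cinner_e0_Gs(1)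
      by (simp add: mult.commute)
  qed
  finally show "cinner (vkron w e0) (clifford_sum *\<^sub>v vkron psi e0)
      = (\<Sum>i<length As. Gs!i $$ (0, 0) * cinner w (shiftA i *\<^sub>v psi))" .
qed

lemma localizer_mult_tensor:
  assumes psi: "psi \<in> carrier_vec n"
  shows "localizer m Gs As B lam nu *\<^sub>v vkron psi e0
    = clifford_sum *\<^sub>v vkron psi e0 + vkron (shiftB *\<^sub>v psi) e0"
proof -
  let ?N = "n * (2 * m)" and ?phi = "vkron psi e0"
  have phi: "?phi \<in> carrier_vec ?N"
    by (rule vkron_carrier[OF psi e0_carrier])
  have P: "kron shiftB (Pmat m) \<in> carrier_mat ?N ?N"
    by (rule kron_carrier[OF shiftB_carrier Pmat_carrier])
  have Q: "kron (ctrans shiftB) (Qmat m) \<in> carrier_mat ?N ?N"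
    by (rule kron_carrier[OF ctrans_carrier[OF shiftB_carrier] Qmat_carrier])
  have S: "clifford_sum \<in> carrier_mat ?N ?N"
    unfolding clifford_sum_def by (rule msum_carrier)
  have "localizer m Gs As B lam nu *\<^sub>v ?phi
      = (clifford_sum *\<^sub>v ?phi + kron shiftB (Pmat m) *\<^sub>v ?phi) - kron (ctrans shiftB) (Qmat m) *\<^sub>v ?phi"
    unfolding localizer_eq using S P Q phi
    by (simp add: minus_mult_distrib_mat_vec[of _ ?N ?N] add_mult_distrib_mat_vec[OF S P phi])
  also have "kron shiftB (Pmat m) *\<^sub>v ?phi = vkron (shiftB *\<^sub>v psi) e0"
    using kron_mult_vkron[OF shiftB_carrier Pmat_carrier psi e0_carrier]
    by (simp only: Pmat_mult_unit_vec0[OF m_pos])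
  also have "kron (ctrans shiftB) (Qmat m) *\<^sub>v ?phi = 0\<^sub>v ?N"
    using kron_mult_vkron[OF ctrans_carrier[OF shiftB_carrier] Qmat_carrier psi e0_carrier]
      ctrans_carrier[OF shiftB_carrier]
    by (simp add: Qmat_mult_unit_vec0[OF m_pos] vkron_zero_right)
  finally show ?thesis
    using S phi shiftB_carrier psi by (simp add: vkron_carrier)
qed

lemma cinner_localizer_tensor:
  assumes psi: "psi \<in> carrier_vec n"
  defines "u i \<equiv> shiftA i *\<^sub>v psi" and "w \<equiv> shiftB *\<^sub>v psi"
  shows "cinner (localizer m Gs As B lam nu *\<^sub>v vkron psi e0) (localizer m Gs As B lam nu *\<^sub>v vkron psi e0)
       = (\<Sum>i<length As. \<Sum>k<length As. cinner (Gs!i *\<^sub>v e0) (Gs!k *\<^sub>v e0) * cinner (u i) (u k))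
         + (\<Sum>i<length As. Gs!i $$ (0, 0) * (cinner (u i) w + cinner w (u i))) + cinner w w"
proof -
  let ?a = "clifford_sum *\<^sub>v vkron psi e0" and ?b = "vkron w e0"
  have w: "w \<in> carrier_vec n"
    unfolding w_def by (rule mult_mat_vec_carrier[OF shiftB_carrier psi])
  have a: "?a \<in> carrier_vec (n * (2 * m))"
    unfolding clifford_sum_def by (rule mult_mat_vec_carrier[OF msum_carrier vkron_carrier[OF psi e0_carrier]])
  have b: "?b \<in> carrier_vec (n * (2 * m))"
    by (rule vkron_carrier[OF w e0_carrier])
  have "cinner (?a + ?b) (?a + ?b) = cinner ?a ?a + cinner ?a ?b + (cinner ?b ?a + cinner ?b ?b)"
    using a b by (simp add: cinner_add_left[of _ "n * (2 * m)"] cinner_add_right[of _ "n * (2 * m)"])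
  moreover have "cinner ?b ?b = cinner w w"
    using w m_pos by (simp add: cinner_vkron[OF w w e0_carrier e0_carrier] cinner_unit_vec_left)
  ultimately show ?thesis
    unfolding localizer_mult_tensor[OF psi] w_def[symmetric] u_def
      cinner_clifford_sum_tensor[OF psi] cinner_clifford_sum_tensor_e0[OF psi w]
    by (simp add: sum.distrib distrib_left)
qed

lemma Gmat_mult_tensor:
  assumes psi: "psi \<in> carrier_vec n" and i: "i < length As"
  shows "Gmat i *\<^sub>v vkron psi e0 = vkron (shiftA i *\<^sub>v (shiftB *\<^sub>v psi)) (Gs!i *\<^sub>v e0)"
  unfolding Gmat_def
    kron_mult_vkron[OF mult_carrier_mat[OF shiftA_carrier shiftB_carrier]
      mult_carrier_mat[OF Gs_carrier[OF i] Pmat_carrier] psi e0_carrier]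
    assoc_mult_mat_vec[OF shiftA_carrier shiftB_carrier psi]
    assoc_mult_mat_vec[OF Gs_carrier[OF i] Pmat_carrier e0_carrier] Pmat_mult_unit_vec0[OF m_pos] ..

lemma Hmat_mult_tensor:
  assumes psi: "psi \<in> carrier_vec n" and i: "i < length As"
  shows "Hmat i *\<^sub>v vkron psi e0 = 0\<^sub>v (n * (2 * m))"
proof -
  have "(Gs!i * Qmat m) *\<^sub>v e0 = 0\<^sub>v (2 * m)"
    unfolding assoc_mult_mat_vec[OF Gs_carrier[OF i] Qmat_carrier e0_carrier] Qmat_mult_unit_vec0[OF m_pos]
    by (rule mult_mat_zero_vec[OF Gs_carrier[OF i]])
  then show ?thesis
    unfolding Hmat_def
      kron_mult_vkron[OF mult_carrier_mat[OF shiftA_carrier ctrans_carrier[OF shiftB_carrier]]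
        mult_carrier_mat[OF Gs_carrier[OF i] Qmat_carrier] psi e0_carrier]
    using shiftA_carrier[of i] by (simp add: vkron_zero_right)
qed

lemma cinner_Gmat_tensor:
  assumes psi: "psi \<in> carrier_vec n" and i: "i < length As"
  shows "cinner (vkron psi e0) (Gmat i *\<^sub>v vkron psi e0)
    = Gs!i $$ (0, 0) * cinner (shiftA i *\<^sub>v psi) (shiftB *\<^sub>v psi)"
proof -
  have w: "shiftB *\<^sub>v psi \<in> carrier_vec n"
    by (rule mult_mat_vec_carrier[OF shiftB_carrier psi])
  have "cinner (vkron psi e0) (Gmat i *\<^sub>v vkron psi e0)
      = cinner psi (shiftA i *\<^sub>v (shiftB *\<^sub>v psi)) * cinner e0 (Gs!i *\<^sub>v e0)"
    unfolding Gmat_mult_tensor[OF psi i]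
    by (rule cinner_vkron[OF psi mult_mat_vec_carrier[OF shiftA_carrier w]
          e0_carrier mult_mat_vec_carrier[OF Gs_carrier[OF i] e0_carrier]])
  also have "cinner psi (shiftA i *\<^sub>v (shiftB *\<^sub>v psi)) = cinner (shiftA i *\<^sub>v psi) (shiftB *\<^sub>v psi)"
    using shiftA_carrier[of i] psi w
    by (intro cinner_hermitian[OF shiftA_hermitian[OF i], symmetric]) simp_all
  finally show ?thesis
    unfolding cinner_e0_Gs(1)[OF i] by (simp only: mult.commute)
qed

lemma cinner_Fmat_tensor:
  assumes psi: "psi \<in> carrier_vec n"
  defines "u i \<equiv> shiftA i *\<^sub>v psi" and "w \<equiv> shiftB *\<^sub>v psi"
  shows "cinner (vkron psi e0) (Fmat m Gs As B lam nu *\<^sub>v vkron psi e0)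
       = (\<Sum>i<length As. Gs!i $$ (0, 0) * (cinner (u i) w + cinner w (u i)))"
proof -
  let ?N = "n * (2 * m)" and ?phi = "vkron psi e0"
  let ?GG = "\<lambda>i. Gmat i + ctrans (Gmat i)" and ?HH = "\<lambda>i. Hmat i + ctrans (Hmat i)"
  have phi: "?phi \<in> carrier_vec ?N"
    by (rule vkron_carrier[OF psi e0_carrier])
  have GG: "?GG i \<in> carrier_mat ?N ?N" and HH: "?HH i \<in> carrier_mat ?N ?N" if "i \<in> {..<length As}" for i
    using that Gmat_carrier[of i] Hmat_carrier[of i] by (auto intro: add_carrier_mat ctrans_carrier)
  have G_term: "cinner ?phi (?GG i *\<^sub>v ?phi) = Gs!i $$ (0, 0) * (cinner (u i) w + cinner w (u i))"
    if "i < length As" for i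
  proof -
    have "cnj (cinner (u i) w) = cinner w (u i)"
      unfolding u_def w_def using shiftA_carrier[of i] shiftB_carrier psi
      by (intro cinner_commute[symmetric]) simp
    then show ?thesis
      unfolding cinner_plus_ctrans[OF Gmat_carrier[OF that] phi] cinner_Gmat_tensor[OF psi that]
        u_def w_def
      by (simp add: Gs_index_real[OF that] distrib_left)
  qed
  have H_term: "cinner ?phi (?HH i *\<^sub>v ?phi) = 0" if "i < length As" for i
    unfolding cinner_plus_ctrans[OF Hmat_carrier[OF that] phi] Hmat_mult_tensor[OF psi that]
    using phi by (simp add: cinner_zero_right)
  have "cinner ?phi (Fmat m Gs As B lam nu *\<^sub>v ?phi)
      = cinner ?phi (msum ?N ?GG {..<length As} *\<^sub>v ?phi) - cinner ?phi (msum ?N ?HH {..<length As} *\<^sub>v ?phi)"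
    unfolding Fmat_eq minus_mult_distrib_mat_vec[OF msum_carrier msum_carrier phi]
    by (rule cinner_diff_right[OF phi mult_mat_vec_carrier[OF msum_carrier phi]
          mult_mat_vec_carrier[OF msum_carrier phi]])
  also have "\<dots> = (\<Sum>i<length As. cinner ?phi (?GG i *\<^sub>v ?phi))
      - (\<Sum>i<length As. cinner ?phi (?HH i *\<^sub>v ?phi))"
    by (simp only: cinner_msum_mult_right[OF GG phi phi] cinner_msum_mult_right[OF HH phi phi])
  finally show ?thesis
    using G_term H_term by simp
qed

lemma vnorm_tensor_e0:
  "psi \<in> carrier_vec n \<Longrightarrow> vnorm psi = 1 \<Longrightarrow> vnorm (vkron psi e0) = 1"
  using vnorm_vkron[OF _ e0_carrier] vnorm_unit_vec[of 0 "2 * m"] m_pos by simp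

lemma localizer_tensor_norm_sq_le:
  assumes psi: "psi \<in> carrier_vec n" "vnorm psi = 1"
  shows "(vnorm (localizer m Gs As B lam nu *\<^sub>v vkron psi e0))\<^sup>2
    \<le> (\<Sum>i<length As. (vnorm (As!i *\<^sub>v psi - complex_of_real (lam!i) \<cdot>\<^sub>v psi))\<^sup>2)
      + (vnorm (B *\<^sub>v psi - nu \<cdot>\<^sub>v psi))\<^sup>2
      + (\<Sum>(i, k)\<in>offdiag (length As). opnorm (As!i * As!k - As!k * As!i))
      + opnorm (Fmat m Gs As B lam nu)"
proof -
  define u where "u i = shiftA i *\<^sub>v psi" for i
  define w where "w = shiftB *\<^sub>v psi"
  define Off where
    "Off = (\<Sum>(i, k)\<in>offdiag (length As). cinner (Gs!i *\<^sub>v e0) (Gs!k *\<^sub>v e0) * cinner (u i) (u k))"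
  let ?L = "localizer m Gs As B lam nu" and ?F = "Fmat m Gs As B lam nu" and ?phi = "vkron psi e0"
  have gram: "(\<Sum>i<length As. \<Sum>k<length As. cinner (Gs!i *\<^sub>v e0) (Gs!k *\<^sub>v e0) * cinner (u i) (u k))
      = complex_of_real (\<Sum>i<length As. (vnorm (u i))\<^sup>2) + Off"
    unfolding sum_square_diag_offdiag Off_def
    by (simp add: vnorm_eq_1I[OF clifford_gram_diag] cinner_self)
  have Off_le: "cmod Off \<le> (\<Sum>(i, k)\<in>offdiag (length As). opnorm (As!i * As!k - As!k * As!i))"
    using clifford_offdiag_le[OF psi] norm_ge_zero[of Off] unfolding Off_def u_def by linarith
  have F_le: "cmod (cinner ?phi (?F *\<^sub>v ?phi)) \<le> opnorm ?F"
    by (rule cinner_mult_le_opnorm[OF Fmat_carrier vkron_carrier[OF psi(1) e0_carrier] vnorm_tensor_e0[OF psi]])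
  have "(vnorm (?L *\<^sub>v ?phi))\<^sup>2 = Re (cinner (?L *\<^sub>v ?phi) (?L *\<^sub>v ?phi))"
    by (rule vnorm_sq_eq_Re_cinner)
  also have "\<dots>
      = (\<Sum>i<length As. (vnorm (u i))\<^sup>2) + Re Off + Re (cinner ?phi (?F *\<^sub>v ?phi)) + (vnorm w)\<^sup>2"
    unfolding cinner_localizer_tensor[OF psi(1)] cinner_Fmat_tensor[OF psi(1)]
      u_def[symmetric] w_def[symmetric] gram
    by (simp add: cinner_self)
  also have "\<dots> \<le> (\<Sum>i<length As. (vnorm (u i))\<^sup>2) + (vnorm w)\<^sup>2
      + (\<Sum>(i, k)\<in>offdiag (length As). opnorm (As!i * As!k - As!k * As!i)) + opnorm ?F"
    using complex_Re_le_cmod[of Off] complex_Re_le_cmod[of "cinner ?phi (?F *\<^sub>v ?phi)"] Off_le F_le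
    by linarith
  also have "(\<Sum>i<length As. (vnorm (u i))\<^sup>2)
      = (\<Sum>i<length As. (vnorm (As!i *\<^sub>v psi - complex_of_real (lam!i) \<cdot>\<^sub>v psi))\<^sup>2)"
    unfolding u_def shiftA_def using As_carrier psi(1) by (simp add: shift_mult_vec)
  also have "w = B *\<^sub>v psi - nu \<cdot>\<^sub>v psi"
    unfolding w_def shiftB_def by (rule shift_mult_vec[OF B psi(1)])
  finally show ?thesis
    by simp
qed

end

theorem mainTheorem4:
  fixes n m :: nat and Gs As :: "complex mat list" and B :: "complex mat"
    and lam :: "real list" and nu :: complex and psi :: "complex vec"
    and eps1 eps2 :: real
  assumes "n > 0" and "m > 0" and "length As > 0"
    and "length Gs = length As" and "clifford_rep m Gs"
    and "\<forall>i<length As. As!i \<in> carrier_mat n n \<and> hermitian_mat (As!i)"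
    and "B \<in> carrier_mat n n"
    and "length lam = length As"
    and "psi \<in> carrier_vec n" and "vnorm psi = 1"
    and "eps1 \<ge> 0" and "eps2 \<ge> 0"
    and "(\<Sum>i<length As. (vnorm (As!i *\<^sub>v psi - complex_of_real (lam!i) \<cdot>\<^sub>v psi))\<^sup>2)
           + (vnorm (B *\<^sub>v psi - nu \<cdot>\<^sub>v psi))\<^sup>2 \<le> eps1"
    and "(\<Sum>(i,k)\<in>{(i,k). i < length As \<and> k < length As \<and> i \<noteq> k}.
             opnorm (As!i * As!k - As!k * As!i))
           + opnorm (Fmat m Gs As B lam nu) \<le> eps2"
  shows "(lam, nu) \<in> clifford_radial_pseudospectrum m Gs (sqrt (eps1 + eps2)) As B"
proof -
  interpret clifford_localizer n m Gs As B lam nu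
    using assms by unfold_locales auto
  let ?L = "localizer m Gs As B lam nu" and ?phi = "vkron psi (unit_vec (2 * m) 0)"
  have phi: "?phi \<in> carrier_vec (dim_col ?L)" "vnorm ?phi = 1"
    using vkron_carrier[OF assms(9) e0_carrier] localizer_carrier vnorm_tensor_e0[OF assms(9,10)] by auto
  have "(vnorm (?L *\<^sub>v ?phi))\<^sup>2 \<le> eps1 + eps2"
    using localizer_tensor_norm_sq_le[OF assms(9,10)] assms(13,14) unfolding offdiag_def by linarith
  then have "vnorm (?L *\<^sub>v ?phi) \<le> sqrt (eps1 + eps2)"
    by (rule real_le_rsqrt)
  moreover have "sigma_min ?L \<le> vnorm (?L *\<^sub>v ?phi)"
    by (rule sigma_min_le_vnorm_mult[OF phi])
  ultimately show ?thesis
    using assms(8) unfolding clifford_radial_pseudospectrum_def clifford_radial_gap_def by simp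
qed

end
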